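(* In the setting below, let $\overline S_i=S_a\times\{b\}$ and $\overline S_j=S_b\times\{c\}$ for some $1\le i,j\le\overline M$, $1\le a,b,c\le M$. Then for every bounded continuous $f:[0,\infty)\to\mathbb R$, $$\lim_{\varepsilon\downarrow0}\Big(\mathbb E f\Big(\frac{\overline T^\varepsilon(\bar x,\overline S_j)}{\overline\tau^\varepsilon_i}\Big)-\mathbb E f\Big(\frac{T^\varepsilon(y,S_b)}{\tau^\varepsilon_{ab}}\Big)\Big)=0$$ uniformly in $\bar x\in\overline S_i$, $y\in S_a$, where $\overline\tau^\varepsilon_i:=\tau^\varepsilon_{ab}$.
   Context: $S$ is a metric space partitioned into disjoint Borel sets $S_1,\dots,S_M$; for $\varepsilon>0$, $Q^\varepsilon$ is a Markov kernel from $S$ to $S\times[0,\infty)$, $P^\varepsilon(x,B)=Q^\varepsilon(x,B\times[0,\infty))$, and for $P^\varepsilon(x,B)>0$, $T^\varepsilon(x,B)$ has law $\mathbb P(T^\varepsilon(x,B)\le t)=Q^\varepsilon(x,B\times[0,t])/P^\varepsilon(x,B)$. Assumptions: $P^\varepsilon(x,S_i)=0$ for $x\in S_i$; for $i\ne j$, either $P^\varepsilon(x,S_j)=0$ for all $x\in S_i,\varepsilon$ (set $P^\varepsilon_{ij}\equiv0$) or it is positive for all $x\in S_i,\varepsilon$ and there are positive $P^\varepsilon_{ij}$ with $P^\varepsilon(x,S_j)/P^\varepsilon_{ij}\to1$ uniformly in $x\in S_i$; for $P^\varepsilon_{ij}\not\equiv0$ there are positive $\tau^\varepsilon_{ij}$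 with $\mathbb ET^\varepsilon(x,S_j)/\tau^\varepsilon_{ij}\to1$ uniformly in $x\in S_i$; and for every bounded continuous $f$ and $P^\varepsilon_{ij}\not\equiv0$, $\mathbb E f(T^\varepsilon(x_1,S_j)/\tau^\varepsilon_{ij})-\mathbb E f(T^\varepsilon(x_2,S_j)/\tau^\varepsilon_{ij})\to0$ uniformly in $x_1,x_2\in S_i$. Extended process: $\overline S=\{(x,j):x\in S_i,\ P^\varepsilon_{ij}\not\equiv0\}$ with kernel $\overline Q^\varepsilon((x,j),(A\times\{k\})\times I)=\frac{1}{P^\varepsilon(x,S_j)}\int_{A\cap S_j}P^\varepsilon(y,S_k)Q^\varepsilon(x,dy\times I)$; $\overline S$ is partitioned into the sets $S_a\times\{b\}$ with $P^\varepsilon_{ab}\not\equiv0$, re-indexed $\overline S_1,\dots,\overline S_{\overline M}$; $\overline P^\varepsilon(\bar x,B)=\overline Q^\varepsilon(\bar x,B\times[0,\infty))$, and $\overline T^\varepsilon(\bar x,B)$ has law $\overline Q^\varepsilon(\bar x,B\times\cdot)/\overline P^\varepsilon(\bar x,B)$. *)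

theory Defs
  imports "HOL-Probability.Probability"
begin

text \<open>A kernel Q : real => 'b => ('b x real) measure; for each eps, x the measure Q eps x
  is a probability measure on pairs (next state, holding time).\<close>

definition Pk :: "('b \<times> real) measure \<Rightarrow> 'b set \<Rightarrow> real" where
  "Pk \<mu> B = measure \<mu> (B \<times> {0..})"

text \<open>Law of the time T(x,B): P(T \<le> t) = Q(x, B x [0,t]) / P(x,B).\<close>
definition Tlaw :: "('b \<times> real) measure \<Rightarrow> 'b set \<Rightarrow> real measure" where
  "Tlaw \<mu> B = scale_measure (ennreal (1 / Pk \<mu> B))
                 (distr (density \<mu> (indicator (B \<times> {0..}))) borel snd)"

definition ET :: "('b \<times> real) measure \<Rightarrow> 'b set \<Rightarrow> (real \<Rightarrow> real) \<Rightarrow> real" where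
  "ET \<mu> B g = (\<integral>t. g t \<partial>Tlaw \<mu> B)"

definition meanT :: "('b \<times> real) measure \<Rightarrow> 'b set \<Rightarrow> real" where
  "meanT \<mu> B = enn2real (\<integral>\<^sup>+ t. ennreal t \<partial>Tlaw \<mu> B)"

definition conn :: "(nat \<Rightarrow> nat \<Rightarrow> real \<Rightarrow> real) \<Rightarrow> nat \<Rightarrow> nat \<Rightarrow> bool" where
  "conn Pc i j \<longleftrightarrow> (\<exists>\<epsilon>>0. Pc i j \<epsilon> \<noteq> 0)"

text \<open>Extended kernel on ('a x nat) x real:
  Qbar((x,j), (A x {k}) x I) = 1/P(x,S_j) * \<integral>_{A \<inter> S_j} P(y,S_k) Q(x, dy x I).\<close>
definition Qbar :: "nat \<Rightarrow> (nat \<Rightarrow> 'a::metric_space set) \<Rightarrow> (real \<Rightarrow> 'a \<Rightarrow> ('a \<times> real) measure)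
      \<Rightarrow> real \<Rightarrow> 'a \<times> nat \<Rightarrow> (('a \<times> nat) \<times> real) measure" where
  "Qbar M S Q \<epsilon> xj =
     measure_of UNIV (sets ((borel \<Otimes>\<^sub>M count_space UNIV) \<Otimes>\<^sub>M borel))
       (\<lambda>C. \<integral>\<^sup>+ z. (\<Sum>k\<in>{1..M}. indicator C ((fst z, k), snd z)
               * indicator (S (snd xj)) (fst z)
               * ennreal (Pk (Q \<epsilon> (fst z)) (S k) / Pk (Q \<epsilon> (fst xj)) (S (snd xj)))) \<partial>Q \<epsilon> (fst xj))"

end

theory Submission
  imports Defs
begin

(* Let xb = (x, b). Only the summand k = c of the extended kernel charges (S_b \<times> {c}) \<times> [0, \<infinity>),
   so the hitting time of S_b \<times> {c} from xb has the law of the holding time under Q^\<epsilon>(x, \<cdot>),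
   restricted to S_b and reweighted by y \<mapsto> P^\<epsilon>(y, S_c) / P^\<epsilon>(x, S_b). Since
   P^\<epsilon>(y, S_c) / P^\<epsilon>_bc \<rightarrow> 1 uniformly on S_b, this weight is, up to a constant factor, uniformly
   close to the plain indicator of S_b, and a relative perturbation \<delta> of the weight moves a weighted
   average of a function bounded by B by at most 4 B \<delta>. Hence E f(Tbar(xb, Sbar_j) / \<tau>_ab) is close to
   E f(T(x, S_b) / \<tau>_ab), which in turn is uniformly close to E f(T(y, S_b) / \<tau>_ab) for y \<in> S_a by
   the assumed uniformity of these laws over S_a. *)

lemma integral_scale_measure:
  fixes g :: "'b \<Rightarrow> real"
  assumes "0 \<le> c" "g \<in> borel_measurable N"
  shows "integral\<^sup>L (scale_measure (ennreal c) N) g = c * integral\<^sup>L N g"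
proof -
  have "scale_measure (ennreal c) N = density N (\<lambda>_. ennreal c)"
    by (rule measure_eqI) (simp_all add: emeasure_density nn_integral_cmult_indicator)
  then show ?thesis using assms by (simp add: integral_density)
qed

lemma abs_integral_le_integral:
  fixes f g :: "'b \<Rightarrow> real"
  assumes "integrable M f" "integrable M g" "\<And>x. \<bar>f x\<bar> \<le> g x"
  shows "\<bar>\<integral>x. f x \<partial>M\<bar> \<le> (\<integral>x. g x \<partial>M)"
proof -
  have "\<bar>\<integral>x. f x \<partial>M\<bar> \<le> (\<integral>x. \<bar>f x\<bar> \<partial>M)" by (rule integral_abs_bound)
  also have "\<dots> \<le> (\<integral>x. g x \<partial>M)" using assms by (intro integral_mono) auto
  finally show ?thesis .
qed

lemma ratio_perturbation:
  fixes u w ug wg B \<delta> :: real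
  assumes u: "0 < u" and w: "\<bar>w - u\<bar> \<le> \<delta> * u"
    and wg: "\<bar>wg - ug\<bar> \<le> \<delta> * B * u" and ug: "\<bar>ug\<bar> \<le> B * u"
    and \<delta>: "\<delta> \<le> 1/2"
  shows "\<bar>wg / w - ug / u\<bar> \<le> 4 * B * \<delta>"
proof -
  have "\<delta> * u \<le> u / 2" using \<delta> u by (simp add: mult_right_mono)
  then have w_ge: "u / 2 \<le> w" using w by (simp add: abs_le_iff)
  have w_pos: "0 < w" using w_ge u by linarith
  have \<delta>_nonneg: "0 \<le> \<delta>" using order.trans[OF abs_ge_zero w] u by (simp add: zero_le_mult_iff)
  have ugu: "\<bar>ug / u\<bar> \<le> B" using ug u by (simp add: pos_divide_le_eq)
  have B_nonneg: "0 \<le> B" using order.trans[OF abs_ge_zero ugu] .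
  have "wg / w - ug / u = ((wg - ug) + (ug / u) * (u - w)) / w"
    using w_pos u by (simp add: field_simps)
  also have "\<bar>\<dots>\<bar> \<le> (2 * (\<delta> * B * u)) / w"
  proof -
    have "\<bar>ug / u\<bar> * \<bar>u - w\<bar> \<le> B * (\<delta> * u)"
      using w ugu B_nonneg by (intro mult_mono) (auto simp: abs_minus_commute)
    then have "\<bar>(ug / u) * (u - w)\<bar> \<le> \<delta> * B * u"
      by (simp add: abs_mult mult_ac)
    then have "\<bar>(wg - ug) + (ug / u) * (u - w)\<bar> \<le> 2 * (\<delta> * B * u)"
      using order.trans[OF abs_triangle_ineq add_mono[OF wg]] by (simp only: mult_2)
    then show ?thesis
      unfolding abs_divide abs_of_pos[OF w_pos] by (rule divide_right_mono) (use w_pos in simp)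
  qed
  also have "\<dots> \<le> (2 * (\<delta> * B * u)) / (u / 2)"
    using w_ge u \<delta>_nonneg B_nonneg by (intro frac_le) auto
  also have "\<dots> = 4 * B * \<delta>" using u by simp
  finally show ?thesis .
qed

lemma weighted_average_perturbation:
  fixes U V G :: "'b \<Rightarrow> real"
  assumes U_int: "integrable \<mu> U" and V_meas: "V \<in> borel_measurable \<mu>"
    and G_meas: "G \<in> borel_measurable \<mu>" and U_nonneg: "\<And>z. 0 \<le> U z"
    and U_pos: "0 < integral\<^sup>L \<mu> U" and k: "0 < k"
    and VU: "\<And>z. \<bar>k * V z - U z\<bar> \<le> \<delta> * U z"
    and G_bound: "\<And>z. U z \<noteq> 0 \<Longrightarrow> \<bar>G z\<bar> \<le> B" and \<delta>: "\<delta> \<le> 1/2"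
  shows "\<bar>(\<integral>z. V z * G z \<partial>\<mu>) / integral\<^sup>L \<mu> V - (\<integral>z. U z * G z \<partial>\<mu>) / integral\<^sup>L \<mu> U\<bar>
           \<le> 4 * B * \<delta>"
proof -
  define W where "W z = k * V z" for z
  have W_U: "\<bar>W z - U z\<bar> \<le> \<delta> * U z" for z
    using VU unfolding W_def .
  have UG: "\<bar>U z * G z\<bar> \<le> B * U z" for z
    using G_bound[of z] U_nonneg[of z] by (cases "U z = 0") (auto simp: abs_mult mult.commute mult_left_mono)
  have WUG: "\<bar>(W z - U z) * G z\<bar> \<le> \<delta> * B * U z" for z
  proof (cases "U z = 0")
    case False
    have "\<bar>W z - U z\<bar> * \<bar>G z\<bar> \<le> (\<delta> * U z) * B"
      using W_U[of z] G_bound[OF False] order.trans[OF abs_ge_zero W_U] by (intro mult_mono) auto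
    then show ?thesis by (simp add: abs_mult mult_ac)
  qed (use W_U[of z] in simp)
  have W_meas: "W \<in> borel_measurable \<mu>" unfolding W_def using V_meas by simp
  have "\<bar>W z\<bar> \<le> (1 + \<delta>) * U z" for z
    using W_U[of z] U_nonneg[of z] by (simp add: abs_le_iff algebra_simps)
  then have W_int: "integrable \<mu> W"
    by (intro Bochner_Integration.integrable_bound[OF integrable_mult_right[OF U_int, of "1 + \<delta>"] W_meas])
      (auto intro: order.trans[OF _ abs_ge_self])
  have UG_int: "integrable \<mu> (\<lambda>z. U z * G z)"
    by (rule Bochner_Integration.integrable_bound[OF integrable_mult_right[OF U_int, of B]])
      (use U_int G_meas UG in \<open>auto intro: order.trans[OF _ abs_ge_self]\<close>)
  have WUG_int: "integrable \<mu> (\<lambda>z. (W z - U z) * G z)"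
    by (rule Bochner_Integration.integrable_bound[OF integrable_mult_right[OF U_int, of "\<delta> * B"]])
      (use W_meas U_int G_meas WUG in \<open>auto simp: mult.assoc intro: order.trans[OF _ abs_ge_self]\<close>)
  have WG_int: "integrable \<mu> (\<lambda>z. W z * G z)"
    using Bochner_Integration.integrable_add[OF WUG_int UG_int] by (simp add: left_diff_distrib)
  have "\<bar>integral\<^sup>L \<mu> W - integral\<^sup>L \<mu> U\<bar> \<le> \<delta> * integral\<^sup>L \<mu> U"
    using abs_integral_le_integral[of \<mu> "\<lambda>z. W z - U z" "\<lambda>z. \<delta> * U z"] W_int U_int W_U by simp
  moreover have "\<bar>(\<integral>z. W z * G z \<partial>\<mu>) - (\<integral>z. U z * G z \<partial>\<mu>)\<bar> \<le> \<delta> * B * integral\<^sup>L \<mu> U"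
    using abs_integral_le_integral[of \<mu> "\<lambda>z. (W z - U z) * G z" "\<lambda>z. \<delta> * B * U z"]
      WUG_int WG_int UG_int U_int WUG by (simp add: left_diff_distrib)
  moreover have "\<bar>\<integral>z. U z * G z \<partial>\<mu>\<bar> \<le> B * integral\<^sup>L \<mu> U"
    using abs_integral_le_integral[of \<mu> "\<lambda>z. U z * G z" "\<lambda>z. B * U z"] UG_int U_int UG by simp
  ultimately have "\<bar>(\<integral>z. W z * G z \<partial>\<mu>) / integral\<^sup>L \<mu> W - (\<integral>z. U z * G z \<partial>\<mu>) / integral\<^sup>L \<mu> U\<bar>
                     \<le> 4 * B * \<delta>"
    using ratio_perturbation U_pos \<delta> by blast
  moreover have "(\<integral>z. W z * G z \<partial>\<mu>) / integral\<^sup>L \<mu> W = (\<integral>z. V z * G z \<partial>\<mu>) / integral\<^sup>L \<mu> V"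
    using k unfolding W_def by (simp add: mult.assoc)
  ultimately show ?thesis by simp
qed

lemma emeasure_measure_of_sum_pushforward:
  fixes \<phi> :: "'i \<Rightarrow> 'b \<Rightarrow> 'c" and w :: "'i \<Rightarrow> 'b \<Rightarrow> ennreal"
  assumes \<phi>: "\<And>k. k \<in> I \<Longrightarrow> \<phi> k \<in> measurable N \<Omega>"
    and w: "\<And>k. k \<in> I \<Longrightarrow> w k \<in> borel_measurable N" and C: "C \<in> sets \<Omega>"
  defines "\<nu> \<equiv> \<lambda>C. \<integral>\<^sup>+z. (\<Sum>k\<in>I. indicator C (\<phi> k z) * w k z) \<partial>N"
  shows "emeasure (measure_of (space \<Omega>) (sets \<Omega>) \<nu>) C = \<nu> C"
proof (rule emeasure_measure_of_sigma[OF sets.sigma_algebra_axioms _ _ C])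
  show "positive (sets \<Omega>) \<nu>" by (simp add: positive_def \<nu>_def)
  show "countably_additive (sets \<Omega>) \<nu>"
    unfolding countably_additive_def
  proof (intro allI impI)
    fix A :: "nat \<Rightarrow> 'c set"
    assume A: "range A \<subseteq> sets \<Omega>" "disjoint_family A"
    have "(\<Sum>i. \<nu> (A i)) = (\<integral>\<^sup>+z. (\<Sum>i. \<Sum>k\<in>I. indicator (A i) (\<phi> k z) * w k z) \<partial>N)"
      unfolding \<nu>_def using A(1) \<phi> w by (intro nn_integral_suminf[symmetric]) auto
    also have "\<dots> = \<nu> (\<Union> (range A))"
      unfolding \<nu>_def using suminf_indicator[OF A(2)]
      by (simp only: suminf_sum[OF summableI] ennreal_suminf_multc)
    finally show "(\<Sum>i. \<nu> (A i)) = \<nu> (\<Union> (range A))" .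
  qed
qed

definition weighted_time_law :: "('b \<times> real) measure \<Rightarrow> ('b \<times> real \<Rightarrow> real) \<Rightarrow> real measure" where
  "weighted_time_law \<mu> h =
     scale_measure (ennreal (1 / integral\<^sup>L \<mu> h)) (distr (density \<mu> (\<lambda>z. ennreal (h z))) borel snd)"

lemma integral_weighted_time_law:
  fixes g :: "real \<Rightarrow> real"
  assumes snd_meas: "snd \<in> measurable \<mu> borel" and h_meas: "h \<in> borel_measurable \<mu>"
    and h_nonneg: "\<And>z. 0 \<le> h z" and g_meas: "g \<in> borel_measurable borel"
  shows "integral\<^sup>L (weighted_time_law \<mu> h) g = (\<integral>z. h z * g (snd z) \<partial>\<mu>) / integral\<^sup>L \<mu> h"
proof -
  have "integral\<^sup>L (distr (density \<mu> (\<lambda>z. ennreal (h z))) borel snd) g = (\<integral>z. h z * g (snd z) \<partial>\<mu>)"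
    using snd_meas h_meas h_nonneg g_meas by (simp add: integral_distr integral_density)
  moreover have "0 \<le> 1 / integral\<^sup>L \<mu> h" using h_nonneg by simp
  ultimately show ?thesis
    unfolding weighted_time_law_def using g_meas by (simp add: integral_scale_measure)
qed

lemma Tlaw_eq_weighted_time_law:
  assumes "B \<times> {0..} \<in> sets \<mu>"
  shows "Tlaw \<mu> B = weighted_time_law \<mu> (indicator (B \<times> {0..}))"
  using assms by (simp add: Tlaw_def weighted_time_law_def Pk_def ennreal_indicator)

lemma ET_eq_weighted_average:
  assumes B: "B \<times> {0..} \<in> sets \<mu>" and snd_meas: "snd \<in> measurable \<mu> borel"
    and g_meas: "g \<in> borel_measurable borel"
  shows "ET \<mu> B g =
    (\<integral>z. indicator (B \<times> {0..}) z * g (snd z) \<partial>\<mu>) / integral\<^sup>L \<mu> (indicator (B \<times> {0..}))"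
  unfolding ET_def Tlaw_eq_weighted_time_law[OF B]
  using snd_meas B g_meas by (intro integral_weighted_time_law) auto

lemma ET_eq_0_if_not_measurable:
  assumes "g \<notin> borel_measurable borel"
  shows "ET \<mu> B g = 0"
proof -
  have "sets (Tlaw \<mu> B) = sets borel" by (simp add: Tlaw_def)
  then have "\<not> integrable (Tlaw \<mu> B) g"
    using assms measurable_cong_sets[of "Tlaw \<mu> B" borel] by blast
  then show ?thesis unfolding ET_def by (rule not_integrable_integral_eq)
qed

locale semi_markov_kernel =
  fixes M :: nat and S :: "nat \<Rightarrow> 'a::metric_space set"
    and Q :: "real \<Rightarrow> 'a \<Rightarrow> ('a \<times> real) measure" and \<epsilon> :: real
  assumes prob_space_Q: "\<And>y. prob_space (Q \<epsilon> y)"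
    and sets_Q: "\<And>y. sets (Q \<epsilon> y) = sets (borel \<Otimes>\<^sub>M borel)"
    and emeasure_Q_measurable:
      "\<And>A. A \<in> sets (borel \<Otimes>\<^sub>M borel) \<Longrightarrow> (\<lambda>y. emeasure (Q \<epsilon> y) A) \<in> borel_measurable borel"
    and S_borel: "\<And>i. i \<in> {1..M} \<Longrightarrow> S i \<in> sets borel"
begin

lemma measurable_Q: "measurable (Q \<epsilon> y) N = measurable (borel \<Otimes>\<^sub>M borel) N"
  using sets_Q by (rule measurable_cong_sets) simp

lemma space_Q: "space (Q \<epsilon> y) = UNIV"
  using sets_eq_imp_space_eq[OF sets_Q] by (simp add: space_pair_measure)

lemma borel_measurable_Pk_S: "k \<in> {1..M} \<Longrightarrow> (\<lambda>y. Pk (Q \<epsilon> y) (S k)) \<in> borel_measurable borel"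
  unfolding Pk_def measure_def using emeasure_Q_measurable S_borel
  by (intro borel_measurable_enn2real) auto

lemma emeasure_Qbar:
  assumes j: "j \<in> {1..M}" and C: "C \<in> sets ((borel \<Otimes>\<^sub>M count_space UNIV) \<Otimes>\<^sub>M borel)"
  shows "emeasure (Qbar M S Q \<epsilon> (x, j)) C =
    (\<integral>\<^sup>+z. (\<Sum>k\<in>{1..M}. indicator C ((fst z, k), snd z) *
       (indicator (S j) (fst z) * ennreal (Pk (Q \<epsilon> (fst z)) (S k) / Pk (Q \<epsilon> x) (S j)))) \<partial>Q \<epsilon> x)"
proof -
  let ?\<Omega> = "(borel \<Otimes>\<^sub>M count_space UNIV) \<Otimes>\<^sub>M borel :: (('a \<times> nat) \<times> real) measure"
  have "Qbar M S Q \<epsilon> (x, j) = measure_of (space ?\<Omega>) (sets ?\<Omega>)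
    (\<lambda>C. \<integral>\<^sup>+z. (\<Sum>k\<in>{1..M}. indicator C ((fst z, k), snd z) *
       (indicator (S j) (fst z) * ennreal (Pk (Q \<epsilon> (fst z)) (S k) / Pk (Q \<epsilon> x) (S j)))) \<partial>Q \<epsilon> x)"
    by (simp add: Qbar_def space_pair_measure mult.assoc)
  also have "emeasure \<dots> C = (\<integral>\<^sup>+z. (\<Sum>k\<in>{1..M}. indicator C ((fst z, k), snd z) *
       (indicator (S j) (fst z) * ennreal (Pk (Q \<epsilon> (fst z)) (S k) / Pk (Q \<epsilon> x) (S j)))) \<partial>Q \<epsilon> x)"
    using borel_measurable_Pk_S S_borel[OF j] C
    by (intro emeasure_measure_of_sum_pushforward) (auto simp: measurable_Q)
  finally show ?thesis .
qed

lemma sets_Qbar: "sets (Qbar M S Q \<epsilon> xj) = sets ((borel \<Otimes>\<^sub>M count_space UNIV) \<Otimes>\<^sub>M borel)"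
  using sets.sigma_sets_eq[of "(borel \<Otimes>\<^sub>M count_space UNIV) \<Otimes>\<^sub>M borel"]
  by (simp add: Qbar_def space_pair_measure)

definition Qbar_weight :: "'a \<Rightarrow> nat \<Rightarrow> nat \<Rightarrow> 'a \<times> real \<Rightarrow> real" where
  "Qbar_weight x b c z = indicator (S b \<times> {0..}) z * (Pk (Q \<epsilon> (fst z)) (S c) / Pk (Q \<epsilon> x) (S b))"

lemma Qbar_weight_measurable: "b \<in> {1..M} \<Longrightarrow> c \<in> {1..M} \<Longrightarrow> Qbar_weight x b c \<in> borel_measurable (Q \<epsilon> y)"
  unfolding Qbar_weight_def measurable_Q using borel_measurable_Pk_S S_borel by measurable

lemma Qbar_weight_nonneg: "0 \<le> Qbar_weight x b c z"
  by (simp add: Qbar_weight_def Pk_def)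

lemma Qbar_restrict_eq_distr:
  assumes b: "b \<in> {1..M}" and c: "c \<in> {1..M}"
  shows "density (Qbar M S Q \<epsilon> (x, b)) (indicator ((S b \<times> {c}) \<times> {0..})) =
    distr (density (Q \<epsilon> x) (\<lambda>z. ennreal (Qbar_weight x b c z)))
      ((borel \<Otimes>\<^sub>M count_space UNIV) \<Otimes>\<^sub>M borel) (\<lambda>z. ((fst z, c), snd z))"
    (is "density ?Qbar (indicator ?D) = distr ?\<nu> ?\<Omega> ?F")
proof (rule measure_eqI)
  show "sets (density ?Qbar (indicator ?D)) = sets (distr ?\<nu> ?\<Omega> ?F)"
    by (simp add: sets_Qbar)
  fix C assume "C \<in> sets (density ?Qbar (indicator ?D))"
  then have C: "C \<in> sets ?\<Omega>" by (simp add: sets_Qbar)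
  have D: "?D \<in> sets ?\<Omega>" using S_borel[OF b] by measurable
  have F: "?F \<in> measurable (Q \<epsilon> x) ?\<Omega>" unfolding measurable_Q by measurable
  have F_C: "?F -` C \<in> sets (Q \<epsilon> x)" using measurable_sets[OF F C] by (simp add: space_Q)
  have collapse: "(\<Sum>k\<in>{1..M}. indicator (?D \<inter> C) ((fst z, k), snd z) *
       (indicator (S b) (fst z) * ennreal (Pk (Q \<epsilon> (fst z)) (S k) / Pk (Q \<epsilon> x) (S b))))
     = ennreal (Qbar_weight x b c z) * indicator (?F -` C) z" for z
  proof -
    have "indicator (?D \<inter> C) ((fst z, k), snd z) *
       (indicator (S b) (fst z) * ennreal (Pk (Q \<epsilon> (fst z)) (S k) / Pk (Q \<epsilon> x) (S b)))
     = (if k = c then ennreal (Qbar_weight x b c z) * indicator (?F -` C) z else 0)" for k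
      by (cases z) (auto simp: Qbar_weight_def indicator_def)
    then show ?thesis using c by simp
  qed
  have "emeasure (density ?Qbar (indicator ?D)) C = emeasure ?Qbar (?D \<inter> C)"
    using D C by (simp add: emeasure_restricted sets_Qbar)
  also have "\<dots> = (\<integral>\<^sup>+z. ennreal (Qbar_weight x b c z) * indicator (?F -` C) z \<partial>Q \<epsilon> x)"
    using D C by (simp only: emeasure_Qbar[OF b] sets.Int collapse)
  also have "\<dots> = emeasure (distr ?\<nu> ?\<Omega> ?F) C"
    using F C F_C Qbar_weight_measurable[OF b c] by (simp add: emeasure_distr emeasure_density space_Q)
  finally show "emeasure (density ?Qbar (indicator ?D)) C = emeasure (distr ?\<nu> ?\<Omega> ?F) C" .
qed

lemma Tlaw_Qbar:
  assumes b: "b \<in> {1..M}" and c: "c \<in> {1..M}"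
  shows "Tlaw (Qbar M S Q \<epsilon> (x, b)) (S b \<times> {c}) = weighted_time_law (Q \<epsilon> x) (Qbar_weight x b c)"
proof -
  let ?Qbar = "Qbar M S Q \<epsilon> (x, b)" and ?D = "(S b \<times> {c}) \<times> {0::real..}"
    and ?\<nu> = "density (Q \<epsilon> x) (\<lambda>z. ennreal (Qbar_weight x b c z))"
    and ?\<Omega> = "(borel \<Otimes>\<^sub>M count_space UNIV) \<Otimes>\<^sub>M borel :: (('a \<times> nat) \<times> real) measure"
    and ?F = "\<lambda>z :: 'a \<times> real. ((fst z, c), snd z)"
  have D: "?D \<in> sets ?Qbar" using S_borel[OF b] unfolding sets_Qbar by measurable
  have F: "?F \<in> measurable ?\<nu> ?\<Omega>" unfolding measurable_density_eq1 measurable_Q by measurable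
  have restrict: "density ?Qbar (\<lambda>z. ennreal (indicator ?D z)) = distr ?\<nu> ?\<Omega> ?F"
    using Qbar_restrict_eq_distr[OF b c] by (simp add: ennreal_indicator)
  have "integral\<^sup>L ?Qbar (indicator ?D) = integral\<^sup>L (density ?Qbar (\<lambda>z. ennreal (indicator ?D z))) (\<lambda>_. 1::real)"
    using D by (subst integral_density) auto
  also have "\<dots> = integral\<^sup>L ?\<nu> (\<lambda>_. 1)"
    unfolding restrict using F by (rule integral_distr) simp
  also have "\<dots> = integral\<^sup>L (Q \<epsilon> x) (Qbar_weight x b c)"
    using Qbar_weight_measurable[OF b c] Qbar_weight_nonneg by (subst integral_density) auto
  finally have mass: "integral\<^sup>L ?Qbar (indicator ?D) = integral\<^sup>L (Q \<epsilon> x) (Qbar_weight x b c)" .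
  have "distr (density ?Qbar (\<lambda>z. ennreal (indicator ?D z))) borel snd = distr ?\<nu> borel snd"
    unfolding restrict using F by (simp add: distr_distr comp_def)
  then show ?thesis
    using Tlaw_eq_weighted_time_law[OF D] mass by (simp add: weighted_time_law_def)
qed

lemma ET_Qbar_eq:
  assumes b: "b \<in> {1..M}" and c: "c \<in> {1..M}" and g_meas: "g \<in> borel_measurable borel"
  shows "ET (Qbar M S Q \<epsilon> (x, b)) (S b \<times> {c}) g =
    (\<integral>z. Qbar_weight x b c z * g (snd z) \<partial>Q \<epsilon> x) / integral\<^sup>L (Q \<epsilon> x) (Qbar_weight x b c)"
  unfolding ET_def Tlaw_Qbar[OF b c]
  using Qbar_weight_measurable[OF b c] Qbar_weight_nonneg g_meas
  by (intro integral_weighted_time_law) (auto simp: measurable_Q)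

lemma ET_Qbar_close_ET:
  assumes b: "b \<in> {1..M}" and c: "c \<in> {1..M}" and P_pos: "0 < Pk (Q \<epsilon> x) (S b)" and p: "0 < p"
    and close: "\<And>y. y \<in> S b \<Longrightarrow> \<bar>Pk (Q \<epsilon> y) (S c) / p - 1\<bar> \<le> \<delta>" and \<delta>: "\<delta> \<le> 1/2"
    and g_bound: "\<And>t. 0 \<le> t \<Longrightarrow> \<bar>g t\<bar> \<le> B"
  shows "\<bar>ET (Qbar M S Q \<epsilon> (x, b)) (S b \<times> {c}) g - ET (Q \<epsilon> x) (S b) g\<bar> \<le> 4 * B * \<delta>"
proof (cases "g \<in> borel_measurable borel")
  case False
  (* g is only controlled on [0, \<infinity>), so it need not be Borel; then both sides are the junk value 0. *)
  obtain y where "y \<in> S b" using P_pos by (cases "S b = {}") (auto simp: Pk_def)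
  then have "0 \<le> \<delta>" using order.trans[OF abs_ge_zero close] by blast
  moreover have "0 \<le> B" using order.trans[OF abs_ge_zero g_bound[of 0]] by simp
  ultimately show ?thesis using False by (simp add: ET_eq_0_if_not_measurable)
next
  case g_meas: True
  interpret prob_space "Q \<epsilon> x" by (rule prob_space_Q)
  define U where "U = (indicator (S b \<times> {0..}) :: 'a \<times> real \<Rightarrow> real)"
  define k where "k = Pk (Q \<epsilon> x) (S b) / p"
  have Sb: "S b \<times> {0..} \<in> sets (Q \<epsilon> x)" using S_borel[OF b] unfolding sets_Q by measurable
  have snd_meas: "snd \<in> measurable (Q \<epsilon> x) borel" unfolding measurable_Q by measurable
  have U_int: "integral\<^sup>L (Q \<epsilon> x) U = Pk (Q \<epsilon> x) (S b)"
    using Sb by (simp add: U_def Pk_def)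
  have weight_close: "\<bar>k * Qbar_weight x b c z - U z\<bar> \<le> \<delta> * U z" for z
    using close[of "fst z"] P_pos p by (cases z) (auto simp: Qbar_weight_def U_def k_def indicator_def)
  have G_bound: "\<bar>g (snd z)\<bar> \<le> B" if "U z \<noteq> 0" for z
    using that g_bound by (auto simp: U_def indicator_def)
  show ?thesis
    unfolding ET_Qbar_eq[OF b c g_meas] ET_eq_weighted_average[OF Sb snd_meas g_meas] U_def[symmetric]
  proof (rule weighted_average_perturbation[OF _ _ _ _ _ _ weight_close G_bound \<delta>])
    show "integrable (Q \<epsilon> x) U" using Sb by (simp add: U_def less_top[symmetric])
    show "0 < integral\<^sup>L (Q \<epsilon> x) U" using P_pos U_int by simp
    show "0 < k" using P_pos p by (simp add: k_def)
  qed (use snd_meas g_meas Qbar_weight_measurable[OF b c] in \<open>auto simp: U_def\<close>)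
qed

lemma ET_Qbar_uniformly_close:
  assumes b: "b \<in> {1..M}" and c: "c \<in> {1..M}" and P_pos: "\<forall>x\<in>A. 0 < Pk (Q \<epsilon> x) (S b)"
    and p: "0 < p" and close: "\<forall>y\<in>S b. \<bar>Pk (Q \<epsilon> y) (S c) / p - 1\<bar> < \<delta>" and \<delta>: "\<delta> \<le> 1/2"
    and g_bound: "\<And>t. 0 \<le> t \<Longrightarrow> \<bar>g t\<bar> \<le> B"
    and law: "\<forall>x\<in>A. \<forall>y\<in>A. \<bar>ET (Q \<epsilon> x) (S b) g - ET (Q \<epsilon> y) (S b) g\<bar> < \<eta>"
  shows "\<forall>xb\<in>A \<times> {b}. \<forall>y\<in>A.
           \<bar>ET (Qbar M S Q \<epsilon> xb) (S b \<times> {c}) g - ET (Q \<epsilon> y) (S b) g\<bar> < 4 * B * \<delta> + \<eta>"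
proof (intro ballI)
  fix xb y assume "xb \<in> A \<times> {b}" and y: "y \<in> A"
  then obtain x where x: "x \<in> A" and xb: "xb = (x, b)" by blast
  have "\<bar>ET (Qbar M S Q \<epsilon> (x, b)) (S b \<times> {c}) g - ET (Q \<epsilon> x) (S b) g\<bar> \<le> 4 * B * \<delta>"
    using P_pos x p close g_bound \<delta> by (intro ET_Qbar_close_ET[OF b c]) (auto intro: less_imp_le)
  moreover have "\<bar>ET (Q \<epsilon> x) (S b) g - ET (Q \<epsilon> y) (S b) g\<bar> < \<eta>" using law x y by blast
  ultimately show "\<bar>ET (Qbar M S Q \<epsilon> xb) (S b \<times> {c}) g - ET (Q \<epsilon> y) (S b) g\<bar> < 4 * B * \<delta> + \<eta>"
    unfolding xb by linarith
qed

end

theorem lemma4p2: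
  fixes M :: nat
    and S :: "nat \<Rightarrow> 'a::metric_space set"
    and Q :: "real \<Rightarrow> 'a \<Rightarrow> ('a \<times> real) measure"
    and Pc :: "nat \<Rightarrow> nat \<Rightarrow> real \<Rightarrow> real"
    and \<tau> :: "nat \<Rightarrow> nat \<Rightarrow> real \<Rightarrow> real"
    and a b c :: nat
    and f :: "real \<Rightarrow> real"
  assumes kernel_prob: "\<And>\<epsilon> x. \<epsilon> > 0 \<Longrightarrow> prob_space (Q \<epsilon> x)"
    and kernel_sets: "\<And>\<epsilon> x. \<epsilon> > 0 \<Longrightarrow> sets (Q \<epsilon> x) = sets (borel \<Otimes>\<^sub>M borel)"
    and kernel_time: "\<And>\<epsilon> x. \<epsilon> > 0 \<Longrightarrow> emeasure (Q \<epsilon> x) (UNIV \<times> {0..}) = 1"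
    and kernel_meas: "\<And>\<epsilon> A. \<epsilon> > 0 \<Longrightarrow> A \<in> sets (borel \<Otimes>\<^sub>M borel) \<Longrightarrow>
                        (\<lambda>x. emeasure (Q \<epsilon> x) A) \<in> borel_measurable borel"
    and S_borel: "\<And>i. i \<in> {1..M} \<Longrightarrow> S i \<in> sets borel"
    and S_disj: "\<And>i j. i \<in> {1..M} \<Longrightarrow> j \<in> {1..M} \<Longrightarrow> i \<noteq> j \<Longrightarrow> S i \<inter> S j = {}"
    and S_cover: "(\<Union>i\<in>{1..M}. S i) = UNIV"
    and no_self: "\<And>\<epsilon> i x. \<epsilon> > 0 \<Longrightarrow> i \<in> {1..M} \<Longrightarrow> x \<in> S i \<Longrightarrow> Pk (Q \<epsilon> x) (S i) = 0"
    and Pc_diag: "\<And>\<epsilon> i. \<epsilon> > 0 \<Longrightarrow> Pc i i \<epsilon> = 0"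
    and dichotomy: "\<And>i j. i \<in> {1..M} \<Longrightarrow> j \<in> {1..M} \<Longrightarrow> i \<noteq> j \<Longrightarrow>
          (\<forall>\<epsilon>>0. Pc i j \<epsilon> = 0 \<and> (\<forall>x\<in>S i. Pk (Q \<epsilon> x) (S j) = 0))
        \<or> ((\<forall>\<epsilon>>0. Pc i j \<epsilon> > 0 \<and> (\<forall>x\<in>S i. Pk (Q \<epsilon> x) (S j) > 0))
           \<and> (\<forall>e>0. \<forall>\<^sub>F \<epsilon> in at_right 0. \<forall>x\<in>S i. \<bar>Pk (Q \<epsilon> x) (S j) / Pc i j \<epsilon> - 1\<bar> < e))"
    and tau_pos: "\<And>\<epsilon> i j. i \<in> {1..M} \<Longrightarrow> j \<in> {1..M} \<Longrightarrow> conn Pc i j \<Longrightarrow> \<epsilon> > 0 \<Longrightarrow> \<tau> i j \<epsilon> > 0"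
    and mean_conv: "\<And>i j. i \<in> {1..M} \<Longrightarrow> j \<in> {1..M} \<Longrightarrow> conn Pc i j \<Longrightarrow>
          \<forall>e>0. \<forall>\<^sub>F \<epsilon> in at_right 0. \<forall>x\<in>S i. \<bar>meanT (Q \<epsilon> x) (S j) / \<tau> i j \<epsilon> - 1\<bar> < e"
    and law_unif: "\<And>i j g. i \<in> {1..M} \<Longrightarrow> j \<in> {1..M} \<Longrightarrow> conn Pc i j \<Longrightarrow>
          continuous_on {0..} g \<Longrightarrow> bounded (g ` {0..}) \<Longrightarrow>
          \<forall>e>0. \<forall>\<^sub>F \<epsilon> in at_right 0. \<forall>x1\<in>S i. \<forall>x2\<in>S i.
            \<bar>ET (Q \<epsilon> x1) (S j) (\<lambda>t. g (t / \<tau> i j \<epsilon>))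
             - ET (Q \<epsilon> x2) (S j) (\<lambda>t. g (t / \<tau> i j \<epsilon>))\<bar> < e"
    and abc: "a \<in> {1..M}" "b \<in> {1..M}" "c \<in> {1..M}"
    and ab: "conn Pc a b" and bc: "conn Pc b c"
    and f_cont: "continuous_on {0..} f" and f_bdd: "bounded (f ` {0..})"
  shows "\<forall>e>0. \<forall>\<^sub>F \<epsilon> in at_right 0. \<forall>xb\<in>S a \<times> {b}. \<forall>y\<in>S a.
           \<bar>ET (Qbar M S Q \<epsilon> xb) (S b \<times> {c}) (\<lambda>t. f (t / \<tau> a b \<epsilon>))
            - ET (Q \<epsilon> y) (S b) (\<lambda>t. f (t / \<tau> a b \<epsilon>))\<bar> < e"
proof (intro allI impI)
  fix e :: real assume e: "0 < e"
  have "a \<noteq> b" "b \<noteq> c" using ab bc Pc_diag unfolding conn_def by auto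
  then have P_ab_pos: "\<forall>\<epsilon>>0. \<forall>x\<in>S a. 0 < Pk (Q \<epsilon> x) (S b)"
    and Pc_bc_pos: "\<forall>\<epsilon>>0. 0 < Pc b c \<epsilon>"
    and P_bc_conv: "\<forall>e>0. \<forall>\<^sub>F \<epsilon> in at_right 0. \<forall>y\<in>S b. \<bar>Pk (Q \<epsilon> y) (S c) / Pc b c \<epsilon> - 1\<bar> < e"
    using dichotomy[OF abc(1,2)] dichotomy[OF abc(2,3)] ab bc unfolding conn_def by blast+
  obtain B where B: "0 < B" "\<And>t. 0 \<le> t \<Longrightarrow> \<bar>f t\<bar> \<le> B"
    using f_bdd unfolding bounded_pos by auto
  define \<delta> where "\<delta> = min (1/2) (e / (8 * B))"
  have \<delta>: "0 < \<delta>" "\<delta> \<le> 1/2" "0 < e - 4 * B * \<delta>"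
    using e B by (auto simp: \<delta>_def min_def field_simps)
  have "\<forall>\<^sub>F \<epsilon> in at_right 0. 0 < \<epsilon> \<and> (\<forall>y\<in>S b. \<bar>Pk (Q \<epsilon> y) (S c) / Pc b c \<epsilon> - 1\<bar> < \<delta>) \<and>
      (\<forall>x\<in>S a. \<forall>y\<in>S a. \<bar>ET (Q \<epsilon> x) (S b) (\<lambda>t. f (t / \<tau> a b \<epsilon>))
        - ET (Q \<epsilon> y) (S b) (\<lambda>t. f (t / \<tau> a b \<epsilon>))\<bar> < e - 4 * B * \<delta>)"
    (is "\<forall>\<^sub>F \<epsilon> in _. 0 < \<epsilon> \<and> ?close \<epsilon> \<and> ?law \<epsilon>")
    by (intro eventually_conj eventually_at_right_less P_bc_conv[rule_format, OF \<delta>(1)]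
        law_unif[OF abc(1,2) ab f_cont f_bdd, rule_format, OF \<delta>(3)])
  moreover have "\<forall>xb\<in>S a \<times> {b}. \<forall>y\<in>S a.
      \<bar>ET (Qbar M S Q \<epsilon> xb) (S b \<times> {c}) (\<lambda>t. f (t / \<tau> a b \<epsilon>))
        - ET (Q \<epsilon> y) (S b) (\<lambda>t. f (t / \<tau> a b \<epsilon>))\<bar> < e"
    if "0 < \<epsilon> \<and> ?close \<epsilon> \<and> ?law \<epsilon>" for \<epsilon>
  proof -
    from that have \<epsilon>: "0 < \<epsilon>" and close: "?close \<epsilon>" and law: "?law \<epsilon>" by auto
    interpret semi_markov_kernel M S Q \<epsilon>
      by (rule semi_markov_kernel.intro) (simp_all add: \<epsilon> kernel_prob kernel_sets kernel_meas S_borel)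
    have f_bound: "\<bar>f (t / \<tau> a b \<epsilon>)\<bar> \<le> B" if "0 \<le> t" for t
      using B(2) tau_pos[OF abc(1,2) ab \<epsilon>] that by simp
    show ?thesis
      using ET_Qbar_uniformly_close[OF abc(2,3) _ _ close \<delta>(2) f_bound law] P_ab_pos Pc_bc_pos \<epsilon> by simp
  qed
  ultimately show "\<forall>\<^sub>F \<epsilon> in at_right 0. \<forall>xb\<in>S a \<times> {b}. \<forall>y\<in>S a.
      \<bar>ET (Qbar M S Q \<epsilon> xb) (S b \<times> {c}) (\<lambda>t. f (t / \<tau> a b \<epsilon>))
        - ET (Q \<epsilon> y) (S b) (\<lambda>t. f (t / \<tau> a b \<epsilon>))\<bar> < e"
    by (rule eventually_mono)
qed

end
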